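(* Let $(\mathfrak g,V,\Theta)$ be a Lie–Leibniz triple, with $\mathbb U$, $R_\Theta$, $\sigma$ and $K$ as in the context. Then $K=\{k\in\mathbb U_2:\ [\chi,k]=0\text{ for all }\chi\in R_\Theta\}$; in particular $[R_\Theta,K]=0$.
   Context: Ground field $\mathbb{K}=\mathbb{R}$ or $\mathbb{C}$; all spaces $\mathbb{Z}$-graded with parity equal to degree mod 2. A Lie–Leibniz triple $(\mathfrak g,V,\Theta)$ consists of a Lie algebra $\mathfrak g$, a $\mathfrak g$-module $V$ (action $x\cdot u$) and a linear map $\Theta:V\to\mathfrak g$ with $\Theta(\Theta(u)\cdot v)=[\Theta(u),\Theta(v)]$ for all $u,v\in V$. Construction of $\mathbb U$: $\mathbb U_0=\mathfrak g$, $\mathbb U_1=V[-1]$ ($V$ in degree 1, odd), $\mathbb U_{-p+1}=\mathrm{Hom}(\mathbb U_1,\mathbb U_{-p+2})$ for $p\ge2$; brackets on $\mathbb U_{1-}$: Lie bracket on $\mathfrak g$, and recursively $[x,u]=x(u)$, $[u,x]=-(-1)^{|x|}x(u)$, $[x,y](u)=[x,y(u)]+(-1)^{|y|}[x(u),y]$ for $x,y\in\mathbb U_{0-}$, $u\in\mathbb U_1$, where $x(u)=x\cdot u$ for $x\in\mathfrak g$. This is a semilocal Lie superalgebra and $\mathbb U$ is its unique extension to a Lie superalgebra with $\mathbb U_+$ the free Lie superalgebra on $\mathbb U_1$. $\Theta$ is regarded as an element of $\mathbb U_{-1}=\mathrm{Hom}(\mathbb U_1,\mathfrak g)$. $R_\Theta\subseteq\mathbb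 U_{-1}$ is the $\mathfrak g$-submodule generated by $\Theta$ under the action $x\cdot\phi=[x,\phi]$, i.e. $(x\cdot\phi)(u)=[x,\phi(u)]-\phi(x\cdot u)$; it is the span of $\Theta$ and all $x_1\cdot(x_2\cdot\cdots(x_n\cdot\Theta))$. $\mathbb U_2$ is spanned by the brackets $[u,v]$, $u,v\in\mathbb U_1$ (symmetric in $u,v$). Let $\sigma:\mathbb U_2\to\mathbb U_1$ be the linear map with $\sigma([u,v])=\tfrac12(\Theta(u)\cdot v+\Theta(v)\cdot u)$. $K$ is the sum of all $\mathfrak g$-submodules of $\mathbb U_2$ (for the adjoint action of $\mathfrak g\subseteq\mathbb U$) contained in $\ker\sigma$. *)

theory Defs
  imports Complex_Main "HOL-Library.Function_Algebras"
begin

text \<open>Scalars: a field 'f (instantiated with real and complex in the theorem).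
  g is a vector space via sg with Lie bracket br; V is a vector space via sv with
  g-action act; Theta : V -> g.\<close>

definition lie_leibniz_triple ::
  "('f::field \<Rightarrow> 'g::ab_group_add \<Rightarrow> 'g) \<Rightarrow> ('g \<Rightarrow> 'g \<Rightarrow> 'g) \<Rightarrow>
   ('f \<Rightarrow> 'v::ab_group_add \<Rightarrow> 'v) \<Rightarrow> ('g \<Rightarrow> 'v \<Rightarrow> 'v) \<Rightarrow> ('v \<Rightarrow> 'g) \<Rightarrow> bool" where
  "lie_leibniz_triple sg br sv act Theta \<longleftrightarrow>
     vector_space sg \<and> vector_space sv \<and>
     \<comment> \<open>Lie algebra\<close>
     (\<forall>x y z. br (x + y) z = br x z + br y z) \<and>
     (\<forall>c x y. br (sg c x) y = sg c (br x y)) \<and>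
     (\<forall>x y z. br x (y + z) = br x y + br x z) \<and>
     (\<forall>c x y. br x (sg c y) = sg c (br x y)) \<and>
     (\<forall>x. br x x = 0) \<and>
     (\<forall>x y z. br x (br y z) + br y (br z x) + br z (br x y) = 0) \<and>
     \<comment> \<open>g-module\<close>
     (\<forall>x y u. act (x + y) u = act x u + act y u) \<and>
     (\<forall>c x u. act (sg c x) u = sv c (act x u)) \<and>
     (\<forall>x u w. act x (u + w) = act x u + act x w) \<and>
     (\<forall>c x u. act x (sv c u) = sv c (act x u)) \<and>
     (\<forall>x y u. act (br x y) u = act x (act y u) - act y (act x u)) \<and>
     \<comment> \<open>Theta linear with the Leibniz-type condition\<close>
     Vector_Spaces.linear sv sg Theta \<and>
     (\<forall>u w. Theta (act (Theta u) w) = br (Theta u) (Theta w))"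

definition hom_act :: "('g \<Rightarrow> 'g \<Rightarrow> 'g::ab_group_add) \<Rightarrow> ('g \<Rightarrow> 'v \<Rightarrow> 'v) \<Rightarrow> 'g \<Rightarrow> ('v \<Rightarrow> 'g) \<Rightarrow> ('v \<Rightarrow> 'g)" where
  "hom_act br act x phi = (\<lambda>u. br x (phi u) - phi (act x u))"

inductive_set R_Theta ::
  "('f::field \<Rightarrow> 'g::ab_group_add \<Rightarrow> 'g) \<Rightarrow> ('g \<Rightarrow> 'g \<Rightarrow> 'g) \<Rightarrow> ('g \<Rightarrow> 'v \<Rightarrow> 'v) \<Rightarrow> ('v \<Rightarrow> 'g) \<Rightarrow> ('v \<Rightarrow> 'g) set"
  for sg br act Theta where
  gen: "Theta \<in> R_Theta sg br act Theta"
| zero: "(\<lambda>u. 0) \<in> R_Theta sg br act Theta"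
| add: "phi \<in> R_Theta sg br act Theta \<Longrightarrow> psi \<in> R_Theta sg br act Theta \<Longrightarrow>
        (\<lambda>u. phi u + psi u) \<in> R_Theta sg br act Theta"
| scale: "phi \<in> R_Theta sg br act Theta \<Longrightarrow> (\<lambda>u. sg c (phi u)) \<in> R_Theta sg br act Theta"
| act: "phi \<in> R_Theta sg br act Theta \<Longrightarrow> hom_act br act x phi \<in> R_Theta sg br act Theta"

section \<open>U_2 = S^2 V (degree-2 part of the free Lie superalgebra on odd V)\<close>

text \<open>Formal linear combinations of symbols [u,v] are finitely supported functions
  z :: 'v => 'v => 'f (z u v = coefficient of the symbol [u,v]).\<close>
definition fscale :: "'f::field \<Rightarrow> ('v \<Rightarrow> 'v \<Rightarrow> 'f) \<Rightarrow> ('v \<Rightarrow> 'v \<Rightarrow> 'f)" where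
  "fscale c z = (\<lambda>a b. c * z a b)"

definition fdelta :: "'v \<Rightarrow> 'v \<Rightarrow> ('v \<Rightarrow> 'v \<Rightarrow> 'f::field)" where
  "fdelta u v = (\<lambda>a b. if a = u \<and> b = v then 1 else 0)"

definition formal_space :: "('v \<Rightarrow> 'v \<Rightarrow> 'f::field) set" where
  "formal_space = module.span fscale (range (\<lambda>(u, v). fdelta u v))"

definition sym_rel :: "('f::field \<Rightarrow> 'v::ab_group_add \<Rightarrow> 'v) \<Rightarrow> ('v \<Rightarrow> 'v \<Rightarrow> 'f) set" where
  "sym_rel sv = module.span fscale
     ({fdelta (u + u') w - fdelta u w - fdelta u' w | u u' w. True} \<union>
      {fdelta (sv c u) w - fscale c (fdelta u w) | c u w. True} \<union>
      {fdelta u w - fdelta w u | u w. True})"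

definition U2_class :: "('f::field \<Rightarrow> 'v::ab_group_add \<Rightarrow> 'v) \<Rightarrow> ('v \<Rightarrow> 'v \<Rightarrow> 'f) \<Rightarrow> ('v \<Rightarrow> 'v \<Rightarrow> 'f) set" where
  "U2_class sv z = {z'. z' \<in> formal_space \<and> z' - z \<in> sym_rel sv}"

definition U2 :: "('f::field \<Rightarrow> 'v::ab_group_add \<Rightarrow> 'v) \<Rightarrow> ('v \<Rightarrow> 'v \<Rightarrow> 'f) set set" where
  "U2 sv = U2_class sv ` formal_space"

definition U2_rep :: "('v \<Rightarrow> 'v \<Rightarrow> 'f) set \<Rightarrow> ('v \<Rightarrow> 'v \<Rightarrow> 'f)" where
  "U2_rep X = (SOME z. z \<in> X)"

definition fsupp :: "('v \<Rightarrow> 'v \<Rightarrow> 'f::zero) \<Rightarrow> ('v \<times> 'v) set" where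
  "fsupp z = {(a, b). z a b \<noteq> 0}"

definition formal_eval :: "('f::field \<Rightarrow> 'w::ab_group_add \<Rightarrow> 'w) \<Rightarrow> ('v \<Rightarrow> 'v \<Rightarrow> 'w) \<Rightarrow> ('v \<Rightarrow> 'v \<Rightarrow> 'f) \<Rightarrow> 'w" where
  "formal_eval sw f z = (\<Sum>p\<in>fsupp z. sw (z (fst p) (snd p)) (f (fst p) (snd p)))"

definition U2_zero :: "('f::field \<Rightarrow> 'v::ab_group_add \<Rightarrow> 'v) \<Rightarrow> ('v \<Rightarrow> 'v \<Rightarrow> 'f) set" where
  "U2_zero sv = U2_class sv 0"

definition U2_add :: "('f::field \<Rightarrow> 'v::ab_group_add \<Rightarrow> 'v) \<Rightarrow> ('v \<Rightarrow> 'v \<Rightarrow> 'f) set \<Rightarrow> ('v \<Rightarrow> 'v \<Rightarrow> 'f) set \<Rightarrow> ('v \<Rightarrow> 'v \<Rightarrow> 'f) set" where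
  "U2_add sv X Y = U2_class sv (U2_rep X + U2_rep Y)"

definition U2_scale :: "('f::field \<Rightarrow> 'v::ab_group_add \<Rightarrow> 'v) \<Rightarrow> 'f \<Rightarrow> ('v \<Rightarrow> 'v \<Rightarrow> 'f) set \<Rightarrow> ('v \<Rightarrow> 'v \<Rightarrow> 'f) set" where
  "U2_scale sv c X = U2_class sv (fscale c (U2_rep X))"

definition U2_act :: "('f::field \<Rightarrow> 'v::ab_group_add \<Rightarrow> 'v) \<Rightarrow> ('g \<Rightarrow> 'v \<Rightarrow> 'v) \<Rightarrow> 'g \<Rightarrow> ('v \<Rightarrow> 'v \<Rightarrow> 'f) set \<Rightarrow> ('v \<Rightarrow> 'v \<Rightarrow> 'f) set" where
  "U2_act sv act x X = U2_class sv
     (formal_eval fscale (\<lambda>a b. fdelta (act x a) b + fdelta a (act x b)) (U2_rep X))"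

definition sigma :: "('f::field \<Rightarrow> 'v::ab_group_add \<Rightarrow> 'v) \<Rightarrow> ('g \<Rightarrow> 'v \<Rightarrow> 'v) \<Rightarrow> ('v \<Rightarrow> 'g) \<Rightarrow> ('v \<Rightarrow> 'v \<Rightarrow> 'f) set \<Rightarrow> 'v" where
  "sigma sv act Theta X =
     formal_eval sv (\<lambda>a b. sv (inverse 2) (act (Theta a) b + act (Theta b) a)) (U2_rep X)"

text \<open>Bracket U_{-1} x U_2 -> U_1 in the Lie superalgebra U:
  [phi,[a,b]] = [[phi,a],b] - [a,[phi,b]] = phi(a).b + phi(b).a.\<close>
definition bracket_m1_2 :: "('f::field \<Rightarrow> 'v::ab_group_add \<Rightarrow> 'v) \<Rightarrow> ('g \<Rightarrow> 'v \<Rightarrow> 'v) \<Rightarrow> ('v \<Rightarrow> 'g) \<Rightarrow> ('v \<Rightarrow> 'v \<Rightarrow> 'f) set \<Rightarrow> 'v" where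
  "bracket_m1_2 sv act phi X =
     formal_eval sv (\<lambda>a b. act (phi a) b + act (phi b) a) (U2_rep X)"

definition U2_submodule :: "('f::field \<Rightarrow> 'v::ab_group_add \<Rightarrow> 'v) \<Rightarrow> ('g \<Rightarrow> 'v \<Rightarrow> 'v) \<Rightarrow> ('v \<Rightarrow> 'v \<Rightarrow> 'f) set set \<Rightarrow> bool" where
  "U2_submodule sv act M \<longleftrightarrow>
     M \<subseteq> U2 sv \<and> U2_zero sv \<in> M \<and>
     (\<forall>X\<in>M. \<forall>Y\<in>M. U2_add sv X Y \<in> M) \<and>
     (\<forall>c. \<forall>X\<in>M. U2_scale sv c X \<in> M) \<and>
     (\<forall>x. \<forall>X\<in>M. U2_act sv act x X \<in> M)"

text \<open>K: the sum of all g-submodules of U_2 contained in ker sigma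
  (set of finite sums of elements of such submodules).\<close>
inductive_set K_set :: "('f::field \<Rightarrow> 'v::ab_group_add \<Rightarrow> 'v) \<Rightarrow> ('g \<Rightarrow> 'v \<Rightarrow> 'v) \<Rightarrow> ('v \<Rightarrow> 'g) \<Rightarrow> ('v \<Rightarrow> 'v \<Rightarrow> 'f) set set"
  for sv act Theta where
  zero: "U2_zero sv \<in> K_set sv act Theta"
| sum: "U2_submodule sv act M \<Longrightarrow> (\<forall>Z\<in>M. sigma sv act Theta Z = 0) \<Longrightarrow> X \<in> M \<Longrightarrow>
        Y \<in> K_set sv act Theta \<Longrightarrow> U2_add sv X Y \<in> K_set sv act Theta"

end

theory Submission
  imports Defs
begin

text \<open>For linear \<open>\<chi>\<close> the pairing \<open>[\<chi>, X]\<close> is well defined on \<open>U\<^sub>2\<close>,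
  it satisfies \<open>[x\<cdot>\<chi>, X] = x\<cdot>[\<chi>, X] - [\<chi>, x\<cdot>X]\<close>, and \<open>\<sigma> = [\<Theta>, -]/2\<close>.
  So if \<open>M\<close> is a \<open>\<gg>\<close>-submodule of \<open>ker \<sigma>\<close>, the \<open>\<chi>\<close> annihilating \<open>M\<close> contain
  \<open>\<Theta>\<close> and form a \<open>\<gg>\<close>-submodule, hence contain \<open>R\<^sub>\<Theta>\<close>; thus \<open>K\<close> annihilates \<open>R\<^sub>\<Theta>\<close>.
  Conversely the annihilator of \<open>R\<^sub>\<Theta>\<close> is a \<open>\<gg>\<close>-submodule (as \<open>R\<^sub>\<Theta>\<close> is
  \<open>\<gg>\<close>-stable) inside \<open>ker \<sigma>\<close> (as \<open>\<Theta> \<in> R\<^sub>\<Theta>\<close>), so it is one of the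
  submodules summed in \<open>K\<close>.\<close>

lemma fsupp_zero [simp]: "fsupp 0 = {}"
  by (auto simp: fsupp_def)

lemma fsupp_fdelta [simp]: "fsupp (fdelta u v :: 'v \<Rightarrow> 'v \<Rightarrow> 'f::field) = {(u, v)}"
  by (auto simp: fsupp_def fdelta_def)

lemma fsupp_add: "fsupp (z + w :: 'v \<Rightarrow> 'v \<Rightarrow> 'f::ab_group_add) \<subseteq> fsupp z \<union> fsupp w"
  by (auto simp: fsupp_def)

lemma fsupp_diff: "fsupp (z - w :: 'v \<Rightarrow> 'v \<Rightarrow> 'f::ab_group_add) \<subseteq> fsupp z \<union> fsupp w"
  by (auto simp: fsupp_def)

lemma fsupp_fscale: "fsupp (fscale c z) \<subseteq> fsupp z"
  by (auto simp: fsupp_def fscale_def)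

lemma finite_fsupp_add:
  "finite (fsupp z) \<Longrightarrow> finite (fsupp w) \<Longrightarrow> finite (fsupp (z + w :: 'v \<Rightarrow> 'v \<Rightarrow> 'f::ab_group_add))"
  by (meson finite_UnI finite_subset fsupp_add)

lemma finite_fsupp_fscale: "finite (fsupp z) \<Longrightarrow> finite (fsupp (fscale c z))"
  by (meson finite_subset fsupp_fscale)

lemma finite_fsupp_sum:
  "(\<And>i. i \<in> A \<Longrightarrow> finite (fsupp (g i))) \<Longrightarrow>
   finite (fsupp (\<Sum>i\<in>A. g i :: 'v \<Rightarrow> 'v \<Rightarrow> 'f::ab_group_add))"
  by (induction A rule: infinite_finite_induct) (auto intro: finite_fsupp_add)

context vector_space
begin

lemma formal_eval_superset:
  assumes "finite S" "fsupp z \<subseteq> S"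
  shows "formal_eval scale f z = (\<Sum>(a, b)\<in>S. scale (z a b) (f a b))"
  unfolding formal_eval_def case_prod_beta
  by (rule sum.mono_neutral_left[OF assms]) (auto simp: fsupp_def)

lemma formal_eval_add:
  assumes "finite (fsupp z)" "finite (fsupp w)"
  shows "formal_eval scale f (z + w) = formal_eval scale f z + formal_eval scale f w"
  using assms fsupp_add[of z w]
  by (simp add: formal_eval_superset[of "fsupp z \<union> fsupp w"] scale_left_distrib sum.distrib
      case_prod_beta)

lemma formal_eval_diff:
  assumes "finite (fsupp z)" "finite (fsupp w)"
  shows "formal_eval scale f (z - w) = formal_eval scale f z - formal_eval scale f w"
  using assms fsupp_diff[of z w]
  by (simp add: formal_eval_superset[of "fsupp z \<union> fsupp w"] scale_left_diff_distrib sum_subtractf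
      case_prod_beta)

lemma formal_eval_fscale:
  assumes "finite (fsupp z)"
  shows "formal_eval scale f (fscale c z) = scale c (formal_eval scale f z)"
  using assms fsupp_fscale[of c z]
  by (simp add: formal_eval_superset[of "fsupp z"] scale_sum_right fscale_def case_prod_beta)

lemma formal_eval_zero [simp]: "formal_eval scale f 0 = 0"
  unfolding formal_eval_def by simp

lemma formal_eval_fdelta [simp]: "formal_eval scale f (fdelta u v) = f u v"
  unfolding formal_eval_def fsupp_fdelta by (simp add: fdelta_def)

lemma formal_eval_sum:
  "(\<And>i. i \<in> A \<Longrightarrow> finite (fsupp (g i))) \<Longrightarrow>
   formal_eval scale f (\<Sum>i\<in>A. g i) = (\<Sum>i\<in>A. formal_eval scale f (g i))"
  by (induction A rule: infinite_finite_induct) (auto simp: formal_eval_add finite_fsupp_sum)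

lemma formal_eval_zero_fun: "formal_eval scale (\<lambda>a b. 0) z = 0"
  unfolding formal_eval_def by simp

lemma formal_eval_add_fun:
  "formal_eval scale (\<lambda>a b. f a b + g a b) z = formal_eval scale f z + formal_eval scale g z"
  unfolding formal_eval_def by (simp add: scale_right_distrib sum.distrib)

lemma formal_eval_diff_fun:
  "formal_eval scale (\<lambda>a b. f a b - g a b) z = formal_eval scale f z - formal_eval scale g z"
  unfolding formal_eval_def by (simp add: scale_right_diff_distrib sum_subtractf)

end

lemma formal_eval_linear_image:
  assumes "Vector_Spaces.linear s1 s2 h"
  shows "formal_eval s2 (\<lambda>a b. h (f a b)) z = h (formal_eval s1 f z)"
proof -
  interpret Vector_Spaces.linear s1 s2 h by fact
  show ?thesis unfolding formal_eval_def by (simp add: sum scale)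
qed

lemma formal_eval_formal_eval:
  assumes "vector_space sw" "finite (fsupp z)" "\<And>a b. finite (fsupp (D a b))"
  shows "formal_eval sw f (formal_eval fscale D z) = formal_eval sw (\<lambda>a b. formal_eval sw f (D a b)) z"
proof -
  interpret vector_space sw by fact
  have "formal_eval sw f (formal_eval fscale D z)
      = (\<Sum>p\<in>fsupp z. formal_eval sw f (fscale (z (fst p) (snd p)) (D (fst p) (snd p))))"
    unfolding formal_eval_def[of fscale]
    by (rule formal_eval_sum) (simp add: assms(3) finite_fsupp_fscale)
  then show ?thesis
    by (simp add: formal_eval_fscale assms(3) formal_eval_def[of sw "\<lambda>a b. formal_eval sw f (D a b)"])
qed

interpretation formal: module "fscale :: 'f::field \<Rightarrow> ('v \<Rightarrow> 'v \<Rightarrow> 'f) \<Rightarrow> _"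
  by unfold_locales (auto simp: fscale_def fun_eq_iff algebra_simps)

lemma finite_fsupp_formal_space: "z \<in> formal_space \<Longrightarrow> finite (fsupp z)"
  unfolding formal_space_def
  by (induction rule: formal.span_induct)
     (auto simp: formal.subspace_def finite_fsupp_add finite_fsupp_fscale)

lemma fdelta_in_formal_space: "fdelta u v \<in> formal_space"
  unfolding formal_space_def by (rule formal.span_base) auto

lemma zero_in_formal_space: "0 \<in> formal_space"
  unfolding formal_space_def by (rule formal.span_zero)

lemma formal_space_add: "z \<in> formal_space \<Longrightarrow> w \<in> formal_space \<Longrightarrow> z + w \<in> formal_space"
  unfolding formal_space_def by (rule formal.span_add)

lemma formal_space_diff: "z \<in> formal_space \<Longrightarrow> w \<in> formal_space \<Longrightarrow> z - w \<in> formal_space"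
  unfolding formal_space_def by (rule formal.span_diff)

lemma formal_space_fscale: "z \<in> formal_space \<Longrightarrow> fscale c z \<in> formal_space"
  unfolding formal_space_def by (rule formal.span_scale)

lemma formal_eval_fscale_in_formal_space:
  "(\<And>a b. D a b \<in> formal_space) \<Longrightarrow> formal_eval fscale D z \<in> formal_space"
  unfolding formal_eval_def formal_space_def by (intro formal.span_sum formal.span_scale) auto

definition symmetric_bilinear ::
  "('f::field \<Rightarrow> 'v::ab_group_add \<Rightarrow> 'v) \<Rightarrow> ('f \<Rightarrow> 'w::ab_group_add \<Rightarrow> 'w) \<Rightarrow> ('v \<Rightarrow> 'v \<Rightarrow> 'w) \<Rightarrow> bool"
  where "symmetric_bilinear sv sw F \<longleftrightarrow>
    (\<forall>u u' w. F (u + u') w = F u w + F u' w) \<and> (\<forall>c u w. F (sv c u) w = sw c (F u w)) \<and>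
    (\<forall>u w. F u w = F w u)"

lemma (in vector_space) formal_eval_sym_rel:
  assumes F: "symmetric_bilinear sv scale F" and s: "s \<in> sym_rel sv"
  shows "formal_eval scale F s = 0"
proof -
  let ?P = "\<lambda>s. s \<in> formal_space \<and> formal_eval scale F s = 0"
  have subspace: "formal.subspace (Collect ?P)"
    by (auto simp: formal.subspace_def zero_in_formal_space formal_space_add formal_space_fscale
        formal_eval_add formal_eval_fscale finite_fsupp_formal_space)
  have generators: "?P x" if "x \<in> {fdelta (u + u') w - fdelta u w - fdelta u' w | u u' w. True} \<union>
      {fdelta (sv c u) w - fscale c (fdelta u w) | c u w. True} \<union> {fdelta u w - fdelta w u | u w. True}"
    for x
    using that F
    by (auto simp: symmetric_bilinear_def fdelta_in_formal_space formal_space_diff formal_space_fscale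
        formal_eval_diff formal_eval_fscale finite_fsupp_formal_space)
  have "?P s"
    using s unfolding sym_rel_def by (rule formal.span_induct[OF _ subspace generators])
  then show ?thesis ..
qed

lemma U2_rep_in_U2_class: "z \<in> formal_space \<Longrightarrow> U2_rep (U2_class sv z) \<in> U2_class sv z"
  unfolding U2_rep_def by (rule someI[of _ z]) (simp add: U2_class_def sym_rel_def formal.span_zero)

lemma U2_class_eq:
  assumes "z - w \<in> sym_rel sv"
  shows "U2_class sv z = U2_class sv w"
proof -
  have "z' - z \<in> sym_rel sv \<longleftrightarrow> z' - w \<in> sym_rel sv" for z'
  proof
    assume "z' - z \<in> sym_rel sv"
    from formal.span_add[OF this[unfolded sym_rel_def] assms[unfolded sym_rel_def]]
    show "z' - w \<in> sym_rel sv" by (simp add: sym_rel_def)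
  next
    assume "z' - w \<in> sym_rel sv"
    from formal.span_diff[OF this[unfolded sym_rel_def] assms[unfolded sym_rel_def]]
    show "z' - z \<in> sym_rel sv" by (simp add: sym_rel_def)
  qed
  then show ?thesis
    unfolding U2_class_def by auto
qed

lemma U2_rep_in_formal_space: "X \<in> U2 sv \<Longrightarrow> U2_rep X \<in> formal_space"
  unfolding U2_def using U2_rep_in_U2_class by (auto simp: U2_class_def)

lemma U2_class_U2_rep: "X \<in> U2 sv \<Longrightarrow> U2_class sv (U2_rep X) = X"
proof -
  assume "X \<in> U2 sv"
  then obtain z where z: "z \<in> formal_space" "X = U2_class sv z"
    unfolding U2_def by auto
  then have "U2_rep X - z \<in> sym_rel sv"
    using U2_rep_in_U2_class[OF z(1)] by (simp add: U2_class_def)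
  then show ?thesis
    using z(2) by (rule U2_class_eq[THEN trans, OF _ sym])
qed

lemma U2_class_in_U2: "z \<in> formal_space \<Longrightarrow> U2_class sv z \<in> U2 sv"
  unfolding U2_def by auto

lemma (in vector_space) formal_eval_U2_rep_U2_class:
  assumes "symmetric_bilinear sv scale F" "z \<in> formal_space"
  shows "formal_eval scale F (U2_rep (U2_class sv z)) = formal_eval scale F z"
proof -
  let ?r = "U2_rep (U2_class sv z)"
  have r: "?r \<in> formal_space" "?r - z \<in> sym_rel sv"
    using U2_rep_in_U2_class[OF assms(2)] by (auto simp: U2_class_def)
  have "formal_eval scale F ?r - formal_eval scale F z = formal_eval scale F (?r - z)"
    using r(1) assms(2) by (simp add: formal_eval_diff finite_fsupp_formal_space)
  also have "\<dots> = 0"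
    using assms(1) r(2) by (rule formal_eval_sym_rel)
  finally show ?thesis by simp
qed

lemma U2_zero_in_U2: "U2_zero sv \<in> U2 sv"
  unfolding U2_zero_def by (intro U2_class_in_U2 zero_in_formal_space)

lemma U2_add_in_U2: "X \<in> U2 sv \<Longrightarrow> Y \<in> U2 sv \<Longrightarrow> U2_add sv X Y \<in> U2 sv"
  unfolding U2_add_def by (intro U2_class_in_U2 formal_space_add U2_rep_in_formal_space)

lemma U2_scale_in_U2: "X \<in> U2 sv \<Longrightarrow> U2_scale sv c X \<in> U2 sv"
  unfolding U2_scale_def by (intro U2_class_in_U2 formal_space_fscale U2_rep_in_formal_space)

lemma U2_act_in_U2: "U2_act sv act x X \<in> U2 sv"
  unfolding U2_act_def
  by (intro U2_class_in_U2 formal_eval_fscale_in_formal_space formal_space_add fdelta_in_formal_space)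

lemma U2_add_U2_zero:
  assumes "X \<in> U2 sv"
  shows "U2_add sv X (U2_zero sv) = X"
proof -
  have "U2_rep (U2_zero sv) \<in> sym_rel sv"
    using U2_rep_in_U2_class[OF zero_in_formal_space, of sv] by (simp add: U2_zero_def U2_class_def)
  then have "U2_class sv (U2_rep X + U2_rep (U2_zero sv)) = U2_class sv (U2_rep X)"
    by (intro U2_class_eq) simp
  then show ?thesis
    using assms by (simp add: U2_add_def U2_class_U2_rep)
qed

locale lie_leibniz =
  fixes sg :: "'f::field_char_0 \<Rightarrow> 'g::ab_group_add \<Rightarrow> 'g" and br :: "'g \<Rightarrow> 'g \<Rightarrow> 'g"
    and sv :: "'f \<Rightarrow> 'v::ab_group_add \<Rightarrow> 'v" and act :: "'g \<Rightarrow> 'v \<Rightarrow> 'v" and Theta :: "'v \<Rightarrow> 'g"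
  assumes lie_leibniz_triple: "lie_leibniz_triple sg br sv act Theta"
begin

sublocale vector_space_pair sv sg
  using lie_leibniz_triple by (simp add: lie_leibniz_triple_def vector_space_pair_def)

lemma
  shows bracket_add_right: "br x (y + z) = br x y + br x z"
    and bracket_scale_right: "br x (sg c y) = sg c (br x y)"
    and act_add_left: "act (x + y) u = act x u + act y u"
    and act_scale_left: "act (sg c x) u = sv c (act x u)"
    and act_add_right: "act x (u + w) = act x u + act x w"
    and act_scale_right: "act x (sv c u) = sv c (act x u)"
    and act_bracket: "act (br x y) u = act x (act y u) - act y (act x u)"
    and linear_Theta: "Vector_Spaces.linear sv sg Theta"
  using lie_leibniz_triple by (simp_all add: lie_leibniz_triple_def)

lemma act_zero_left [simp]: "act 0 u = 0"
  using act_add_left[of 0 0 u] by simp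

lemma act_zero_right [simp]: "act x 0 = 0"
  using act_add_right[of x 0 0] by simp

lemma act_diff_left: "act (x - y) u = act x u - act y u"
  using act_add_left[of "x - y" y u] by (simp add: algebra_simps)

lemma linear_act: "Vector_Spaces.linear sv sv (act x)"
  unfolding linear_iff_module_hom module_hom_iff module_iff_vector_space
  by (simp add: vs1.vector_space_axioms act_add_right act_scale_right)

lemma linear_hom_act:
  assumes "Vector_Spaces.linear sv sg phi"
  shows "Vector_Spaces.linear sv sg (hom_act br act x phi)"
  using assms
  unfolding linear_iff_module_hom module_hom_iff
  by (simp add: hom_act_def bracket_add_right bracket_scale_right act_add_right act_scale_right
      vs2.scale_right_diff_distrib)

lemma R_Theta_linear: "chi \<in> R_Theta sg br act Theta \<Longrightarrow> Vector_Spaces.linear sv sg chi"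
  by (induction rule: R_Theta.induct)
     (auto intro: linear_Theta linear_zero linear_compose_add linear_compose_scale_right linear_hom_act)

definition bracket_pairing :: "('v \<Rightarrow> 'g) \<Rightarrow> 'v \<Rightarrow> 'v \<Rightarrow> 'v" where
  "bracket_pairing phi a b = act (phi a) b + act (phi b) a"

lemma bracket_m1_2_eq: "bracket_m1_2 sv act phi X = formal_eval sv (bracket_pairing phi) (U2_rep X)"
  unfolding bracket_m1_2_def bracket_pairing_def ..

lemma symmetric_bilinear_bracket_pairing:
  "Vector_Spaces.linear sv sg phi \<Longrightarrow> symmetric_bilinear sv sv (bracket_pairing phi)"
  by (simp add: symmetric_bilinear_def bracket_pairing_def linear_add linear_scale act_add_left
      act_add_right act_scale_left act_scale_right vs1.scale_right_distrib)

lemma bracket_m1_2_U2_class: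
  assumes "Vector_Spaces.linear sv sg phi" "z \<in> formal_space"
  shows "bracket_m1_2 sv act phi (U2_class sv z) = formal_eval sv (bracket_pairing phi) z"
  unfolding bracket_m1_2_eq
  using vs1.formal_eval_U2_rep_U2_class[OF symmetric_bilinear_bracket_pairing] assms .

lemma bracket_m1_2_U2_zero:
  "Vector_Spaces.linear sv sg phi \<Longrightarrow> bracket_m1_2 sv act phi (U2_zero sv) = 0"
  by (simp add: U2_zero_def bracket_m1_2_U2_class zero_in_formal_space)

lemma bracket_m1_2_U2_add:
  assumes "Vector_Spaces.linear sv sg phi" "X \<in> U2 sv" "Y \<in> U2 sv"
  shows "bracket_m1_2 sv act phi (U2_add sv X Y) = bracket_m1_2 sv act phi X + bracket_m1_2 sv act phi Y"
  using assms
  by (simp add: U2_add_def bracket_m1_2_U2_class bracket_m1_2_eq[symmetric] U2_rep_in_formal_space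
      formal_space_add vs1.formal_eval_add finite_fsupp_formal_space)

lemma bracket_m1_2_U2_scale:
  assumes "Vector_Spaces.linear sv sg phi" "X \<in> U2 sv"
  shows "bracket_m1_2 sv act phi (U2_scale sv c X) = sv c (bracket_m1_2 sv act phi X)"
  using assms
  by (simp add: U2_scale_def bracket_m1_2_U2_class bracket_m1_2_eq[symmetric] U2_rep_in_formal_space
      formal_space_fscale vs1.formal_eval_fscale finite_fsupp_formal_space)

lemma bracket_m1_2_U2_act:
  assumes "Vector_Spaces.linear sv sg phi" "X \<in> U2 sv"
  shows "bracket_m1_2 sv act phi (U2_act sv act x X) =
    formal_eval sv (\<lambda>a b. bracket_pairing phi (act x a) b + bracket_pairing phi a (act x b)) (U2_rep X)"
proof -
  let ?D = "\<lambda>a b. fdelta (act x a) b + fdelta a (act x b)"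
  have D: "?D a b \<in> formal_space" for a b
    by (intro formal_space_add fdelta_in_formal_space)
  have "bracket_m1_2 sv act phi (U2_act sv act x X) =
      formal_eval sv (bracket_pairing phi) (formal_eval fscale ?D (U2_rep X))"
    unfolding U2_act_def using assms(1) D by (intro bracket_m1_2_U2_class formal_eval_fscale_in_formal_space)
  also have "\<dots> = formal_eval sv (\<lambda>a b. formal_eval sv (bracket_pairing phi) (?D a b)) (U2_rep X)"
    using D assms(2)
    by (intro formal_eval_formal_eval vs1.vector_space_axioms finite_fsupp_formal_space U2_rep_in_formal_space)
  also have "\<dots> =
      formal_eval sv (\<lambda>a b. bracket_pairing phi (act x a) b + bracket_pairing phi a (act x b)) (U2_rep X)"
    by (simp add: vs1.formal_eval_add)
  finally show ?thesis .
qed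

lemma bracket_pairing_hom_act:
  "bracket_pairing (hom_act br act x phi) a b =
    act x (bracket_pairing phi a b) - (bracket_pairing phi (act x a) b + bracket_pairing phi a (act x b))"
  by (simp add: bracket_pairing_def hom_act_def act_diff_left act_bracket act_add_right algebra_simps)

lemma bracket_m1_2_hom_act:
  assumes "Vector_Spaces.linear sv sg phi" "X \<in> U2 sv"
  shows "bracket_m1_2 sv act (hom_act br act x phi) X =
    act x (bracket_m1_2 sv act phi X) - bracket_m1_2 sv act phi (U2_act sv act x X)"
proof -
  have "bracket_m1_2 sv act (hom_act br act x phi) X =
      formal_eval sv (\<lambda>a b. act x (bracket_pairing phi a b)) (U2_rep X) -
      formal_eval sv (\<lambda>a b. bracket_pairing phi (act x a) b + bracket_pairing phi a (act x b)) (U2_rep X)"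
    unfolding bracket_m1_2_eq bracket_pairing_hom_act by (rule vs1.formal_eval_diff_fun)
  also have "\<dots> = act x (bracket_m1_2 sv act phi X) - bracket_m1_2 sv act phi (U2_act sv act x X)"
    using bracket_m1_2_U2_act[OF assms] by (simp add: formal_eval_linear_image[OF linear_act] bracket_m1_2_eq)
  finally show ?thesis .
qed

lemma bracket_m1_2_zero_hom: "bracket_m1_2 sv act (\<lambda>u. 0) X = 0"
  by (simp add: bracket_m1_2_def vs1.formal_eval_zero_fun)

lemma bracket_m1_2_add_hom:
  "bracket_m1_2 sv act (\<lambda>u. phi u + psi u) X = bracket_m1_2 sv act phi X + bracket_m1_2 sv act psi X"
  unfolding bracket_m1_2_def vs1.formal_eval_add_fun[symmetric]
  by (simp add: act_add_left algebra_simps)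

lemma bracket_m1_2_scale_hom:
  "bracket_m1_2 sv act (\<lambda>u. sg c (phi u)) X = sv c (bracket_m1_2 sv act phi X)"
  unfolding bracket_m1_2_def formal_eval_linear_image[OF vs1.linear_scale_self, symmetric]
  by (simp add: act_scale_left vs1.scale_right_distrib)

text \<open>Characteristic \<open>0\<close> is needed only here, to cancel the factor \<open>1/2\<close> in \<open>\<sigma>\<close>.\<close>

lemma sigma_eq_0_iff: "sigma sv act Theta X = 0 \<longleftrightarrow> bracket_m1_2 sv act Theta X = 0"
proof -
  have "sigma sv act Theta X = sv (inverse 2) (bracket_m1_2 sv act Theta X)"
    unfolding sigma_def bracket_m1_2_def
    by (simp add: formal_eval_linear_image[OF vs1.linear_scale_self, symmetric] vs1.scale_right_distrib)
  then show ?thesis by simp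
qed

definition R_Theta_annihilator :: "('v \<Rightarrow> 'v \<Rightarrow> 'f) set set" where
  "R_Theta_annihilator = {X \<in> U2 sv. \<forall>chi \<in> R_Theta sg br act Theta. bracket_m1_2 sv act chi X = 0}"

lemma sigma_eq_0_on_R_Theta_annihilator: "X \<in> R_Theta_annihilator \<Longrightarrow> sigma sv act Theta X = 0"
  by (simp add: R_Theta_annihilator_def sigma_eq_0_iff R_Theta.gen)

lemma U2_submodule_R_Theta_annihilator: "U2_submodule sv act R_Theta_annihilator"
  unfolding U2_submodule_def
proof (intro conjI ballI allI)
  show "R_Theta_annihilator \<subseteq> U2 sv"
    by (auto simp: R_Theta_annihilator_def)
  show "U2_zero sv \<in> R_Theta_annihilator"
    by (simp add: R_Theta_annihilator_def U2_zero_in_U2 bracket_m1_2_U2_zero R_Theta_linear)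
  show "U2_add sv X Y \<in> R_Theta_annihilator"
    if "X \<in> R_Theta_annihilator" "Y \<in> R_Theta_annihilator" for X Y
    using that by (simp add: R_Theta_annihilator_def U2_add_in_U2 bracket_m1_2_U2_add R_Theta_linear)
  show "U2_scale sv c X \<in> R_Theta_annihilator" if "X \<in> R_Theta_annihilator" for c X
    using that by (simp add: R_Theta_annihilator_def U2_scale_in_U2 bracket_m1_2_U2_scale R_Theta_linear)
  show "U2_act sv act x X \<in> R_Theta_annihilator" if X: "X \<in> R_Theta_annihilator" for x X
  proof -
    have "bracket_m1_2 sv act chi (U2_act sv act x X) = 0" if chi: "chi \<in> R_Theta sg br act Theta" for chi
    proof -
      have "hom_act br act x chi \<in> R_Theta sg br act Theta"
        using chi by (rule R_Theta.act)
      then show ?thesis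
        using X chi bracket_m1_2_hom_act[OF R_Theta_linear[OF chi], of X x]
        by (simp add: R_Theta_annihilator_def)
    qed
    then show ?thesis
      by (simp add: R_Theta_annihilator_def U2_act_in_U2)
  qed
qed

lemma R_Theta_annihilates_submodule:
  assumes M: "U2_submodule sv act M" and ker: "\<forall>Z\<in>M. sigma sv act Theta Z = 0"
    and chi: "chi \<in> R_Theta sg br act Theta"
  shows "\<forall>X\<in>M. bracket_m1_2 sv act chi X = 0"
  using chi
proof (induction rule: R_Theta.induct)
  case gen
  then show ?case using ker by (simp add: sigma_eq_0_iff)
next
  case zero
  then show ?case by (simp add: bracket_m1_2_zero_hom)
next
  case (add phi psi)
  then show ?case by (simp add: bracket_m1_2_add_hom)
next
  case (scale phi c)
  then show ?case by (simp add: bracket_m1_2_scale_hom)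
next
  case (act phi x)
  then show ?case
    using M by (auto simp: U2_submodule_def bracket_m1_2_hom_act R_Theta_linear)
qed

theorem K_set_eq_R_Theta_annihilator: "K_set sv act Theta = R_Theta_annihilator"
proof
  show "K_set sv act Theta \<subseteq> R_Theta_annihilator"
  proof
    fix X assume "X \<in> K_set sv act Theta"
    then show "X \<in> R_Theta_annihilator"
    proof (induction rule: K_set.induct)
      case zero
      show ?case
        using U2_submodule_R_Theta_annihilator by (simp add: U2_submodule_def)
    next
      case (sum M X Y)
      then have "X \<in> R_Theta_annihilator"
        using R_Theta_annihilates_submodule by (auto simp: R_Theta_annihilator_def U2_submodule_def)
      then show ?case
        using sum.IH U2_submodule_R_Theta_annihilator by (simp add: U2_submodule_def)
    qed
  qed
  show "R_Theta_annihilator \<subseteq> K_set sv act Theta"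
  proof
    fix X assume X: "X \<in> R_Theta_annihilator"
    have "U2_add sv X (U2_zero sv) \<in> K_set sv act Theta"
      using U2_submodule_R_Theta_annihilator _ X K_set.zero
      by (rule K_set.sum) (simp add: sigma_eq_0_on_R_Theta_annihilator)
    then show "X \<in> K_set sv act Theta"
      using X by (simp add: U2_add_U2_zero R_Theta_annihilator_def)
  qed
qed

end

theorem proposition4p7:
  shows "(\<forall>(sg :: real \<Rightarrow> 'g::ab_group_add \<Rightarrow> 'g) br (sv :: real \<Rightarrow> 'v::ab_group_add \<Rightarrow> 'v) act Theta.
            lie_leibniz_triple sg br sv act Theta \<longrightarrow>
              K_set sv act Theta =
                {X \<in> U2 sv. \<forall>chi \<in> R_Theta sg br act Theta. bracket_m1_2 sv act chi X = 0} \<and>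
              (\<forall>chi \<in> R_Theta sg br act Theta. \<forall>X \<in> K_set sv act Theta. bracket_m1_2 sv act chi X = 0))
       \<and>
       (\<forall>(sg :: complex \<Rightarrow> 'h::ab_group_add \<Rightarrow> 'h) br (sv :: complex \<Rightarrow> 'w::ab_group_add \<Rightarrow> 'w) act Theta.
            lie_leibniz_triple sg br sv act Theta \<longrightarrow>
              K_set sv act Theta =
                {X \<in> U2 sv. \<forall>chi \<in> R_Theta sg br act Theta. bracket_m1_2 sv act chi X = 0} \<and>
              (\<forall>chi \<in> R_Theta sg br act Theta. \<forall>X \<in> K_set sv act Theta. bracket_m1_2 sv act chi X = 0))"
  by (auto simp: lie_leibniz.K_set_eq_R_Theta_annihilator lie_leibniz.R_Theta_annihilator_def
      lie_leibniz_def)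

end
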